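(* Let $\gamma_1,\dots,\gamma_n$ be programs with common recorder $h$ and let $h_0$ be a fresh trace variable. For each $j$ let $v_j$ be a state and $Y_j\supseteq CN(\gamma_j)$ a channel set with $v_j\models h_0\downarrow Y_j=h\downarrow Y_j$; let $(v_j,\tau_j,w_j)\in[\![\gamma_j]\!]$ and let $\tau_{ej}$ be a recorded trace with $\tau_j=\tau_{ej}\downarrow Y_j$. Let $\tilde v$ be a state such that at least one of the following holds: (1) for all $j$, $\tilde v=v_j\cdot\tau_{ej}$; or (2) for all $j$, $\tilde v=w_{ej}\cdot\tau_{ej}$ for some state $w_{ej}$ with $w_{ej}=w_j$ on $\{h_0,h\}$ (in particular $w_j\ne\bot$). Then for every channel set $Y\supseteq\bigcup_jCN(\gamma_j)$: if $\tilde v\models h\downarrow Y\succeq h_0$, there is a suffix $\tau_h$ of $\tilde v(h)$ (i.e. $\tilde v(h)=\rho\cdot\tau_h$ for some trace $\rho$) such that $\tau_h\downarrow\gamma_j=\tau_j(h)$ for all $j$ and $\tilde v(h)\downarrow Y=\tilde v(h_0)\cdot(\tau_h\downarrow Y)$.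
   Context: Communicating hybrid programs (CHPs) over real variables, trace variables and channels $\mathbb N$; each program binds at most one trace variable, its recorder. Traces are finite sequences of events $\langle ch,a,d\rangle\in\mathbb N\times\mathbb R\times\mathbb R$; $\tau\downarrow Y$ deletes events with channel outside $Y$; $\tau\downarrow\gamma$ projects onto the channels of program $\gamma$; $\preceq$ is the prefix order ($\succeq$ its converse). A recorded trace is a pair $(h,\tau)$, viewed also as the map sending $h$ to $\tau$ and all other trace variables to $\epsilon$; projection acts pointwise, so $\tau_{ej}\downarrow Y_j$ and $\tau_j(h)$ make sense. States map real variables to reals and trace variables to traces; $v\cdot(h,\tau)$ is $v$ with $v(h)$ replaced by $v(h)\cdot\tau$. The semantics $[\![\gamma]\!]$ of a program is a set of runs $(v,\tau,w)$: initial state $v$, communication $\tau$ recorded by the program's recorder, final state $w$ or $\bot$ (unfinished). $CN(\gamma)$ is the set of channels $ch$ such that $\tau\downarrow\{ch\}\ne\epsilon$ for some run $(v,\tau,w)\in[\![\gamma]\!]$. Bound-effect property: for every run $(v,\tau,w)$ with $w\ne\bot$, $v=w$ on trace variables and on all variables not bound by $\gamma$ (in particular $w(h_0)=v(h_0)$ and $w(h)=v(h)$ for the recorder $h$). *)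

theory Defs
  imports Complex_Main "HOL-Library.Sublist"
begin

type_synonym chan = nat
type_synonym event = "chan \<times> real \<times> real"
type_synonym trace = "event list"

datatype rvar = RVar nat
datatype tvar = TVar nat

type_synonym state = "(rvar \<Rightarrow> real) \<times> (tvar \<Rightarrow> trace)"

definition rv :: "state \<Rightarrow> rvar \<Rightarrow> real" where "rv s = fst s"
definition tv :: "state \<Rightarrow> tvar \<Rightarrow> trace" where "tv s = snd s"

type_synonym rtrace = "tvar \<times> trace"

definition proj :: "trace \<Rightarrow> chan set \<Rightarrow> trace" where
  "proj t Y = filter (\<lambda>e. fst e \<in> Y) t"

definition rmap :: "rtrace \<Rightarrow> tvar \<Rightarrow> trace" where
  "rmap r x = (if x = fst r then snd r else [])"

definition rproj :: "rtrace \<Rightarrow> chan set \<Rightarrow> tvar \<Rightarrow> trace" where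
  "rproj r Y = (\<lambda>x. proj (rmap r x) Y)"

text \<open>v \<cdot> (h,tau): v with v(h) replaced by v(h) @ tau.\<close>
definition sapp :: "state \<Rightarrow> rtrace \<Rightarrow> state" where
  "sapp v r = (fst v, (snd v)(fst r := snd v (fst r) @ snd r))"

text \<open>A run (v, tau, w): initial state, communication recorded on the recorder, final state
  (None = unfinished, i.e. bottom).\<close>
type_synonym run = "state \<times> trace \<times> state option"

definition CN :: "run set \<Rightarrow> chan set" where
  "CN S = {ch. \<exists>v t w. (v, t, w) \<in> S \<and> proj t {ch} \<noteq> []}"

definition bound_effect :: "('p \<Rightarrow> run set) \<Rightarrow> ('p \<Rightarrow> rvar set) \<Rightarrow> bool" where
  "bound_effect sem BV \<longleftrightarrow>
     (\<forall>g v t w. (v, t, Some w) \<in> sem g \<longrightarrow>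
        tv w = tv v \<and> (\<forall>x. x \<notin> BV g \<longrightarrow> rv w x = rv v x))"

end

theory Submission
  imports Defs
begin

(* Write v~(h) restricted to Y as v~(h0) @ r and lift r to a suffix tau_h of v~(h) whose
   Y-projection is r.  For each program, v~ arises by appending tau_ej to a state that agrees
   with v_j on h and h0 (in the second case by the bound-effect property).  Projecting onto
   C = CN(gamma_j), which lies in Y and in Y_j, the prefixes v_j(h0) and v_j(h) agree and the
   appended parts contribute nothing on h0 and tau_j on h; cancelling the common prefix leaves
   tau_h restricted to C = r restricted to C = tau_j. *)

lemma filter_eq_appendD:
  "filter P xs = ys @ zs \<Longrightarrow> \<exists>us vs. xs = us @ vs \<and> filter P vs = zs"
proof (induction xs arbitrary: ys)
  case (Cons x xs)
  show ?case
  proof (cases ys)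
    case Nil
    with Cons.prems show ?thesis by (intro exI[of _ "[]"] exI[of _ "x # xs"]) simp
  next
    case (Cons y ys')
    with Cons.prems have "filter P xs = (if P x then ys' else ys) @ zs"
      by (auto split: if_splits)
    with Cons.IH obtain us vs where "xs = us @ vs" "filter P vs = zs" by blast
    then show ?thesis by (intro exI[of _ "x # us"] exI[of _ vs]) simp
  qed
qed simp

lemma proj_append: "proj (xs @ ys) Y = proj xs Y @ proj ys Y"
  by (simp add: proj_def)

lemma proj_proj: "proj (proj t A) B = proj t (A \<inter> B)"
  by (auto simp: proj_def intro: filter_cong)

lemma proj_proj_subset: "B \<subseteq> A \<Longrightarrow> proj (proj t A) B = proj t B"
  by (simp add: proj_proj Int_absorb1)

lemma proj_eq_subset: "B \<subseteq> A \<Longrightarrow> proj s A = proj t A \<Longrightarrow> proj s B = proj t B"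
  by (metis proj_proj_subset)

lemma proj_CN_run: "(v, t, w) \<in> S \<Longrightarrow> proj t (CN S) = t"
  unfolding proj_def
proof (rule filter_True, intro ballI)
  fix e assume run: "(v, t, w) \<in> S" and e: "e \<in> set t"
  from e have "proj t {fst e} \<noteq> []" by (auto simp: proj_def filter_empty_conv)
  with run show "fst e \<in> CN S" unfolding CN_def by blast
qed

lemma tv_sapp: "tv (sapp u r) x = tv u x @ rmap r x"
  by (auto simp: tv_def sapp_def rmap_def)

lemma bound_effect_tv:
  "bound_effect sem BV \<Longrightarrow> (v, t, Some w) \<in> sem g \<Longrightarrow> tv w = tv v"
  unfolding bound_effect_def by blast

lemma proj_rproj_eq:
  assumes "rmap (h, t) = rproj e Y" and "C \<subseteq> Y"
  shows "proj (rmap e x) C = proj (rmap (h, t) x) C"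
  using fun_cong[OF assms(1), of x] by (simp add: rproj_def proj_proj_subset[OF assms(2)])

lemma proj_residual_eq:
  assumes "C \<subseteq> Y" and "proj (a @ e) Y = a0 @ e0 @ r"
    and "proj a0 C = proj a C" and "proj e0 C = []"
  shows "proj r C = proj e C"
proof -
  have "proj a C @ proj e C = proj (proj (a @ e) Y) C"
    by (simp add: proj_proj_subset[OF assms(1)] proj_append)
  also have "\<dots> = proj a C @ proj r C"
    by (simp only: assms(2)) (simp add: assms(3,4) proj_append)
  finally show ?thesis by simp
qed

lemma proj_CN_residual_recorded:
  assumes fresh: "h0 \<noteq> h" and CN_Y: "CN S \<subseteq> Y" and CN_Yj: "CN S \<subseteq> Yj"
    and run: "(v, t, w) \<in> S"
    and v_h0_h: "proj (tv v h0) Yj = proj (tv v h) Yj"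
    and rtr: "rmap (h, t) = rproj e Yj"
    and u: "tv u h = tv v h" "tv u h0 = tv v h0"
    and split: "proj (tv (sapp u e) h) Y = tv (sapp u e) h0 @ r"
  shows "proj r (CN S) = t"
proof -
  have "proj r (CN S) = proj (rmap e h) (CN S)"
  proof (rule proj_residual_eq[OF CN_Y])
    show "proj (tv v h @ rmap e h) Y = tv v h0 @ rmap e h0 @ r"
      using u split by (simp add: tv_sapp)
    show "proj (tv v h0) (CN S) = proj (tv v h) (CN S)"
      using proj_eq_subset CN_Yj v_h0_h .
    show "proj (rmap e h0) (CN S) = []"
      using proj_rproj_eq[OF rtr CN_Yj, of h0] fresh by (simp add: rmap_def proj_def)
  qed
  also have "\<dots> = t"
    using proj_rproj_eq[OF rtr CN_Yj, of h] proj_CN_run[OF run] by (simp add: rmap_def)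
  finally show ?thesis .
qed

theorem lemmaC1:
  fixes sem :: "'p \<Rightarrow> run set"      \<comment> \<open>semantics [[\<gamma>]]\<close>
    and recorder :: "'p \<Rightarrow> tvar"    \<comment> \<open>the recorder of a program\<close>
    and BV :: "'p \<Rightarrow> rvar set"       \<comment> \<open>bound real variables of a program\<close>
    and TVs :: "'p \<Rightarrow> tvar set"      \<comment> \<open>trace variables occurring in a program\<close>
    and n :: nat
    and \<gamma> :: "nat \<Rightarrow> 'p"
    and h h0 :: tvar
    and v :: "nat \<Rightarrow> state" and Yj :: "nat \<Rightarrow> chan set"
    and \<tau> :: "nat \<Rightarrow> trace" and w :: "nat \<Rightarrow> state option"
    and \<tau>e :: "nat \<Rightarrow> rtrace"
    and vt :: state
  assumes be: "bound_effect sem BV"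
    and rec_occ: "\<And>g. recorder g \<in> TVs g"
    and n_pos: "n \<ge> 1"
    and rec: "\<And>j. j < n \<Longrightarrow> recorder (\<gamma> j) = h"
    and fresh: "h0 \<noteq> h" "\<And>j. j < n \<Longrightarrow> h0 \<notin> TVs (\<gamma> j)"
    and Yj: "\<And>j. j < n \<Longrightarrow> CN (sem (\<gamma> j)) \<subseteq> Yj j"
    and vj: "\<And>j. j < n \<Longrightarrow> proj (tv (v j) h0) (Yj j) = proj (tv (v j) h) (Yj j)"
    and run: "\<And>j. j < n \<Longrightarrow> (v j, \<tau> j, w j) \<in> sem (\<gamma> j)"
    and rtr: "\<And>j. j < n \<Longrightarrow> rmap (h, \<tau> j) = rproj (\<tau>e j) (Yj j)"
    and cases: "(\<forall>j<n. vt = sapp (v j) (\<tau>e j))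
              \<or> (\<forall>j<n. \<exists>wej wj. w j = Some wj \<and> tv wej h0 = tv wj h0 \<and> tv wej h = tv wj h
                         \<and> vt = sapp wej (\<tau>e j))"
  shows "\<forall>Y. (\<Union>j<n. CN (sem (\<gamma> j))) \<subseteq> Y \<longrightarrow>
           prefix (tv vt h0) (proj (tv vt h) Y) \<longrightarrow>
           (\<exists>\<rho> \<tau>h. tv vt h = \<rho> @ \<tau>h
                 \<and> (\<forall>j<n. proj \<tau>h (CN (sem (\<gamma> j))) = rmap (h, \<tau> j) h)
                 \<and> proj (tv vt h) Y = tv vt h0 @ proj \<tau>h Y)"
proof (intro allI impI)
  fix Y assume CN_Y: "(\<Union>j<n. CN (sem (\<gamma> j))) \<subseteq> Y"
    and "prefix (tv vt h0) (proj (tv vt h) Y)"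
  then obtain r where r: "proj (tv vt h) Y = tv vt h0 @ r"
    by (auto simp: prefix_def)
  then obtain \<rho> \<tau>h where \<tau>h: "tv vt h = \<rho> @ \<tau>h" "proj \<tau>h Y = r"
    unfolding proj_def by (blast dest: filter_eq_appendD)
  have "proj \<tau>h (CN (sem (\<gamma> j))) = \<tau> j" if j: "j < n" for j
  proof -
    obtain u where u: "tv u h = tv (v j) h" "tv u h0 = tv (v j) h0" "vt = sapp u (\<tau>e j)"
      using cases
    proof (elim disjE)
      assume "\<forall>j<n. \<exists>wej wj. w j = Some wj \<and> tv wej h0 = tv wj h0 \<and> tv wej h = tv wj h
                         \<and> vt = sapp wej (\<tau>e j)"
      with j run bound_effect_tv[OF be] show thesis by (metis that)
    qed (use j that in blast)
    have "CN (sem (\<gamma> j)) \<subseteq> Y" using CN_Y j by blast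
    with proj_CN_residual_recorded[OF fresh(1) _ Yj[OF j] run[OF j] vj[OF j] rtr[OF j] u(1,2)]
      r[unfolded u(3)] \<tau>h(2)
    show ?thesis by (metis proj_proj_subset)
  qed
  with \<tau>h r show "\<exists>\<rho> \<tau>h. tv vt h = \<rho> @ \<tau>h
                 \<and> (\<forall>j<n. proj \<tau>h (CN (sem (\<gamma> j))) = rmap (h, \<tau> j) h)
                 \<and> proj (tv vt h) Y = tv vt h0 @ proj \<tau>h Y"
    by (auto simp: rmap_def)
qed

end
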